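(* Let $H$ be a complex Hilbert space, $E$ a finite-dimensional subspace of $H$ and $F$ a subspace of $E$. Then for any unitary operator $u$ on $H$ which fixes each element of $E^{\perp}$, there exists a unique unitary operator $\pi_{E,F}(u)$ on $H$ such that: (i) $\pi_{E,F}(u)$ fixes each element of $F^{\perp}$; (ii) the image of $H$ by $u - \pi_{E,F}(u)$ is included in the image of $F^{\perp}$ by $u - \mathrm{Id}$. Moreover, if $G$ is a subspace of $F$, then $\pi_{F,G}(\pi_{E,F}(u))$ is well-defined and equals $\pi_{E,G}(u)$. *)

theory Defs
  imports Complex_Main
begin

text \<open>HOL-Analysis has no complex inner product spaces, so we introduce them here.
  Convention: the inner product is conjugate-linear in the first argument.\<close>

class complex_vector = ab_group_add +
  fixes scaleC :: "complex \<Rightarrow> 'a \<Rightarrow> 'a"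
  assumes scaleC_add_right: "scaleC a (x + y) = scaleC a x + scaleC a y"
    and scaleC_add_left: "scaleC (a + b) x = scaleC a x + scaleC b x"
    and scaleC_scaleC: "scaleC a (scaleC b x) = scaleC (a * b) x"
    and scaleC_one: "scaleC 1 x = x"

class complex_inner = complex_vector +
  fixes cinner :: "'a \<Rightarrow> 'a \<Rightarrow> complex"
  assumes cinner_commute: "cinner x y = cnj (cinner y x)"
    and cinner_add_left: "cinner (x + y) z = cinner x z + cinner y z"
    and cinner_scaleC_left: "cinner (scaleC r x) y = cnj r * cinner x y"
    and cinner_ge_zero: "0 \<le> Re (cinner x x)"
    and cinner_eq_zero_iff: "cinner x x = 0 \<longleftrightarrow> x = 0"

definition cnorm :: "'a::complex_inner \<Rightarrow> real" where
  "cnorm x = sqrt (Re (cinner x x))"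

class chilbert_space = complex_inner +
  assumes complete_cnorm:
    "\<And>X :: nat \<Rightarrow> 'a.
     (\<forall>e>0. \<exists>N::nat. \<forall>m\<ge>N. \<forall>n\<ge>N. sqrt (Re (cinner (X m - X n) (X m - X n))) < e) \<Longrightarrow>
     (\<exists>L. \<forall>e>0. \<exists>N::nat. \<forall>n\<ge>N. sqrt (Re (cinner (X n - L) (X n - L))) < e)"

definition csubspace :: "'a::complex_vector set \<Rightarrow> bool" where
  "csubspace S \<longleftrightarrow> 0 \<in> S \<and> (\<forall>x\<in>S. \<forall>y\<in>S. x + y \<in> S) \<and> (\<forall>c. \<forall>x\<in>S. scaleC c x \<in> S)"

definition cspan :: "'a::complex_vector set \<Rightarrow> 'a set" where
  "cspan B = {\<Sum>b\<in>T. scaleC (c b) b | T c. finite T \<and> T \<subseteq> B}"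

definition finite_dim_csubspace :: "'a::complex_vector set \<Rightarrow> bool" where
  "finite_dim_csubspace E \<longleftrightarrow> csubspace E \<and> (\<exists>B. finite B \<and> E = cspan B)"

definition orthogonal_complement :: "'a::complex_inner set \<Rightarrow> 'a set" where
  "orthogonal_complement S = {x. \<forall>y\<in>S. cinner y x = 0}"

definition clinear :: "('a::complex_vector \<Rightarrow> 'b::complex_vector) \<Rightarrow> bool" where
  "clinear f \<longleftrightarrow> (\<forall>x y. f (x + y) = f x + f y) \<and> (\<forall>c x. f (scaleC c x) = scaleC c (f x))"

definition unitary :: "('a::complex_inner \<Rightarrow> 'a) \<Rightarrow> bool" where
  "unitary u \<longleftrightarrow> clinear u \<and> bij u \<and> (\<forall>x y. cinner (u x) (u y) = cinner x y)"

text \<open>The defining property of \<pi>_{E,F}(u) (E is implicit: only used via u fixing E^perp).\<close>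
definition is_pi :: "'a::complex_inner set \<Rightarrow> ('a \<Rightarrow> 'a) \<Rightarrow> ('a \<Rightarrow> 'a) \<Rightarrow> bool" where
  "is_pi F u p \<longleftrightarrow> unitary p \<and> (\<forall>x\<in>orthogonal_complement F. p x = x)
     \<and> range (\<lambda>x. u x - p x) \<subseteq> (\<lambda>x. u x - x) ` orthogonal_complement F"

definition pi_op :: "'a::complex_inner set \<Rightarrow> 'a set \<Rightarrow> ('a \<Rightarrow> 'a) \<Rightarrow> ('a \<Rightarrow> 'a)" where
  "pi_op E F u = (THE p. is_pi F u p)"

end

theory Submission
  imports Defs
begin

text \<open>
  Uniqueness: if \<open>p\<close> and \<open>q\<close> both qualify, then for every \<open>x\<close> the vector \<open>d = p x - q x\<close>
  satisfies \<open>u z = z + d\<close> for some \<open>z \<in> F\<^sup>\<bottom>\<close>; since \<open>p\<close> and \<open>q\<close> fix \<open>z\<close> and preserve inner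
  products, \<open>d \<bottom> z\<close>, so \<open>\<parallel>z\<parallel>\<^sup>2 = \<parallel>u z\<parallel>\<^sup>2 = \<parallel>z\<parallel>\<^sup>2 + \<parallel>d\<parallel>\<^sup>2\<close> and \<open>d = 0\<close>.

  Existence: the defining property is transitive (\<open>\<pi>\<^sub>F\<^sub>,\<^sub>G \<circ> \<pi>\<^sub>E\<^sub>,\<^sub>F = \<pi>\<^sub>E\<^sub>,\<^sub>G\<close>), so it suffices to
  remove one unit vector \<open>e \<in> F\<^sup>\<bottom>\<close> at a time, walking down an orthonormal basis of \<open>E \<ominus> F\<close>.
  If \<open>q\<close> fixes \<open>(F + \<complex>e)\<^sup>\<bottom>\<close>, then \<open>q x = x + \<langle>e, x\<rangle> w\<close> on \<open>F\<^sup>\<bottom>\<close> with \<open>w = q e - e\<close>, and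
  \<open>p = (I - \<alpha> w w\<^sup>*) \<circ> q\<close> with \<open>\<alpha> = 1 / (1 - \<langle>e, q e\<rangle>)\<close> is unitary, fixes \<open>F\<^sup>\<bottom>\<close>, and
  \<open>q x - p x\<close> is a multiple of \<open>w = (q - I) e\<close>.
  The same transitivity gives the compatibility \<open>\<pi>\<^sub>F\<^sub>,\<^sub>G(\<pi>\<^sub>E\<^sub>,\<^sub>F(u)) = \<pi>\<^sub>E\<^sub>,\<^sub>G(u)\<close>.
\<close>

global_interpretation cvs: vector_space "scaleC :: complex \<Rightarrow> 'a \<Rightarrow> 'a::complex_vector"
  rewrites "cvs.subspace = csubspace" and "cvs.span = cspan"
proof -
  show "vector_space (scaleC :: complex \<Rightarrow> 'a \<Rightarrow> 'a)"
    by unfold_locales (simp_all add: scaleC_add_right scaleC_add_left scaleC_scaleC scaleC_one)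
  then interpret v: vector_space "scaleC :: complex \<Rightarrow> 'a \<Rightarrow> 'a" .
  show "v.subspace = csubspace"
    by (simp add: fun_eq_iff v.subspace_def csubspace_def)
  show "v.span = cspan"
    by (simp add: fun_eq_iff v.span_explicit cspan_def)
qed

subsection \<open>Complex inner products\<close>

lemma cinner_add_right: "cinner x (y + z) = cinner x y + cinner x (z::'a::complex_inner)"
  by (metis cinner_commute cinner_add_left complex_cnj_add)

lemma cinner_scaleC_right: "cinner x (scaleC r y) = r * cinner x (y::'a::complex_inner)"
  by (metis cinner_commute cinner_scaleC_left complex_cnj_mult complex_cnj_cnj)

lemma cinner_zero_left [simp]: "cinner 0 (y::'a::complex_inner) = 0"
  using cinner_scaleC_left[of 0 y y] by simp

lemma cinner_zero_right [simp]: "cinner (y::'a::complex_inner) 0 = 0"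
  using cinner_commute[of y 0] by simp

lemma cinner_diff_left: "cinner (x - y) (z::'a::complex_inner) = cinner x z - cinner y z"
  by (metis cinner_add_left diff_add_cancel eq_diff_eq)

lemma cinner_diff_right: "cinner x (y - z::'a::complex_inner) = cinner x y - cinner x z"
  by (metis cinner_add_right diff_add_cancel eq_diff_eq)

lemma cinner_sum_right: "cinner x (sum f A::'a::complex_inner) = (\<Sum>y\<in>A. cinner x (f y))"
  by (induction A rule: infinite_finite_induct) (simp_all add: cinner_add_right)

lemma cinner_eq_zero_commute: "cinner x y = 0 \<longleftrightarrow> cinner y (x::'a::complex_inner) = 0"
  by (metis cinner_commute complex_cnj_zero_iff)

lemma cinner_self_eq_Re: "cinner x (x::'a::complex_inner) = complex_of_real (Re (cinner x x))"
  using arg_cong[OF cinner_commute[of x x], of Im] by (simp add: complex_eq_iff)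

lemma unit_vector_exists:
  assumes "(v::'a::complex_inner) \<noteq> 0"
  obtains n e where "v = scaleC n e" "e = scaleC (inverse n) v" "cinner e e = 1"
proof -
  define r where "r = sqrt (Re (cinner v v))"
  have "Re (cinner v v) \<noteq> 0"
    using assms cinner_eq_zero_iff[of v] cinner_self_eq_Re[of v] by force
  then have r: "r > 0"
    unfolding r_def using cinner_ge_zero[of v] by simp
  have vv: "cinner v v = complex_of_real (r * r)"
    using cinner_self_eq_Re[of v] cinner_ge_zero[of v] unfolding r_def by simp
  define e where "e = scaleC (complex_of_real (inverse r)) v"
  have "cinner e e = complex_of_real (inverse r * inverse r * (r * r))"
    unfolding e_def by (simp add: cinner_scaleC_left cinner_scaleC_right vv)
  also have "inverse r * inverse r * (r * r) = 1"
    using r by (simp add: field_simps)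
  finally have "cinner e e = 1"
    by simp
  moreover have "v = scaleC (complex_of_real r) e"
    unfolding e_def using r by (simp flip: of_real_mult)
  moreover have "e = scaleC (inverse (complex_of_real r)) v"
    unfolding e_def by (simp add: of_real_inverse)
  ultimately show thesis
    using that by blast
qed

subsection \<open>Orthogonal complements\<close>

lemma csubspace_orthogonal_complement: "csubspace (orthogonal_complement S)"
  unfolding csubspace_def orthogonal_complement_def
  by (auto simp: cinner_add_right cinner_scaleC_right)

lemma orthogonal_complement_antimono:
  "A \<subseteq> B \<Longrightarrow> orthogonal_complement B \<subseteq> orthogonal_complement A"
  unfolding orthogonal_complement_def by auto

lemma orthogonal_complement_cspan: "orthogonal_complement (cspan A) = orthogonal_complement A"
proof
  show "orthogonal_complement (cspan A) \<subseteq> orthogonal_complement A"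
    by (rule orthogonal_complement_antimono[OF cvs.span_superset])
  show "orthogonal_complement A \<subseteq> orthogonal_complement (cspan A)"
  proof
    fix x assume x: "x \<in> orthogonal_complement A"
    have "csubspace {y. cinner y x = 0}"
      unfolding csubspace_def by (simp add: cinner_add_left cinner_scaleC_left)
    then have "cspan A \<subseteq> {y. cinner y x = 0}"
      using x unfolding orthogonal_complement_def by (intro cvs.span_minimal) auto
    then show "x \<in> orthogonal_complement (cspan A)"
      unfolding orthogonal_complement_def by auto
  qed
qed

subsection \<open>Orthonormal bases\<close>

definition orthonormal :: "'a::complex_inner set \<Rightarrow> bool" where
  "orthonormal S \<longleftrightarrow> (\<forall>s\<in>S. cinner s s = 1) \<and> (\<forall>s\<in>S. \<forall>t\<in>S. s \<noteq> t \<longrightarrow> cinner s t = 0)"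

definition proj :: "'a::complex_inner set \<Rightarrow> 'a \<Rightarrow> 'a" where
  "proj S x = (\<Sum>s\<in>S. scaleC (cinner s x) s)"

lemma proj_in_cspan: "proj S x \<in> cspan S"
  unfolding proj_def by (intro cvs.span_sum cvs.span_scale cvs.span_base)

lemma cinner_proj_residual:
  assumes "finite S" "orthonormal S" "t \<in> S"
  shows "cinner t (x - proj S x) = 0"
proof -
  have "cinner t (proj S x) = (\<Sum>s\<in>S. cinner s x * cinner t s)"
    by (simp add: proj_def cinner_sum_right cinner_scaleC_right)
  also have "\<dots> = cinner t x * cinner t t + (\<Sum>s\<in>S - {t}. cinner s x * cinner t s)"
    using assms by (simp add: sum.remove)
  also have "(\<Sum>s\<in>S - {t}. cinner s x * cinner t s) = 0"
    using assms unfolding orthonormal_def by (intro sum.neutral) auto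
  finally show ?thesis
    using assms unfolding orthonormal_def by (simp add: cinner_diff_right)
qed

lemma gram_schmidt_extend:
  assumes "finite B" "finite S\<^sub>0" "orthonormal S\<^sub>0"
  shows "\<exists>S. finite S \<and> orthonormal S \<and> S\<^sub>0 \<subseteq> S \<and> S \<subseteq> cspan (S\<^sub>0 \<union> B) \<and> B \<subseteq> cspan S"
  using assms(1)
proof (induction B rule: finite_induct)
  case empty
  show ?case
    using assms(2,3) cvs.span_superset by (intro exI[of _ S\<^sub>0]) auto
next
  case (insert b B)
  then obtain S where S: "finite S" "orthonormal S" "S\<^sub>0 \<subseteq> S" "S \<subseteq> cspan (S\<^sub>0 \<union> B)" "B \<subseteq> cspan S"
    by blast
  have span_B: "cspan (S\<^sub>0 \<union> B) \<subseteq> cspan (S\<^sub>0 \<union> insert b B)"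
    by (rule cvs.span_mono) auto
  have span_S: "cspan S \<subseteq> cspan (S\<^sub>0 \<union> insert b B)"
    using S(4) span_B by (intro cvs.span_minimal) auto
  define v where "v = b - proj S b"
  show ?case
  proof (cases "v = 0")
    case True
    then have "b \<in> cspan S"
      using proj_in_cspan[of S b] unfolding v_def by simp
    then show ?thesis
      using S span_B by (intro exI[of _ S]) auto
  next
    case False
    then obtain n e where ne: "v = scaleC n e" "e = scaleC (inverse n) v" "cinner e e = 1"
      by (rule unit_vector_exists)
    have "cinner s e = 0" if "s \<in> S" for s
      using cinner_proj_residual[OF S(1,2) that, of b] unfolding ne(2) v_def
      by (simp add: cinner_scaleC_right)
    then have "orthonormal (insert e S)"
      using S(2) ne(3) cinner_eq_zero_commute unfolding orthonormal_def by fastforce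
    moreover have "e \<in> cspan (S\<^sub>0 \<union> insert b B)"
      unfolding ne(2) v_def using proj_in_cspan[of S b] span_S
      by (intro cvs.span_scale cvs.span_diff[OF cvs.span_base]) auto
    moreover have "b \<in> cspan (insert e S)"
    proof -
      have "b = scaleC n e + proj S b"
        using ne(1) unfolding v_def by (simp add: algebra_simps)
      moreover have "proj S b \<in> cspan (insert e S)"
        using proj_in_cspan cvs.span_mono[of S "insert e S"] by blast
      ultimately show ?thesis
        by (metis cvs.span_add cvs.span_base cvs.span_scale insertI1)
    qed
    ultimately show ?thesis
      using S span_B cvs.span_mono[of S "insert e S"] by (intro exI[of _ "insert e S"]) auto
  qed
qed

lemma csubspace_finitely_spanned:
  assumes "finite B" "csubspace F" "F \<subseteq> cspan B"
  obtains T where "finite T" "F = cspan T"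
proof -
  obtain T where T: "T \<subseteq> F" "cvs.independent T" "F \<subseteq> cspan T"
    by (rule cvs.basis_exists)
  have "finite T"
    using cvs.independent_span_bound[OF assms(1) T(2)] T(1) assms(3) by blast
  moreover have "cspan T \<subseteq> F"
    using T(1) assms(2) by (rule cvs.span_minimal)
  ultimately show thesis
    using that T(3) by blast
qed

subsection \<open>Unitary operators\<close>

lemma clinear_diff:
  assumes "clinear f"
  shows "f (x - y) = f x - f y"
proof -
  have "f (x - y) + f y = f x"
    using assms unfolding clinear_def by (metis diff_add_cancel)
  then show ?thesis
    by (simp add: eq_diff_eq)
qed

lemma clinear_0: "clinear f \<Longrightarrow> f 0 = 0"
  using clinear_diff[of f 0 0] by simp

lemma unitary_comp: "unitary p \<Longrightarrow> unitary q \<Longrightarrow> unitary (p \<circ> q)"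
  unfolding unitary_def clinear_def by (simp add: bij_comp)

definition rank_one_update :: "complex \<Rightarrow> 'a::complex_inner \<Rightarrow> 'a \<Rightarrow> 'a" where
  "rank_one_update \<alpha> w y = y - scaleC (\<alpha> * cinner w y) w"

lemma rank_one_update_comp:
  "rank_one_update \<beta> w (rank_one_update \<gamma> w x)
     = rank_one_update (\<beta> + \<gamma> - \<beta> * \<gamma> * cinner w w) w x"
  by (simp add: rank_one_update_def cinner_diff_right cinner_scaleC_right algebra_simps)

lemma unitary_rank_one_update:
  assumes "\<alpha> + cnj \<alpha> = \<alpha> * cnj \<alpha> * cinner w w"
  shows "unitary (rank_one_update \<alpha> w)"
proof -
  have inverse: "rank_one_update \<beta> w \<circ> rank_one_update \<gamma> w = id"
    if "\<beta> + \<gamma> = \<beta> * \<gamma> * cinner w w" for \<beta> \<gamma>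
    using that by (simp add: fun_eq_iff rank_one_update_comp) (simp add: rank_one_update_def)
  have "clinear (rank_one_update \<alpha> w)"
    unfolding clinear_def rank_one_update_def
    by (simp add: cinner_add_right cinner_scaleC_right algebra_simps)
  moreover have "bij (rank_one_update \<alpha> w)"
    using assms by (intro o_bij[OF inverse inverse]) (simp_all add: algebra_simps)
  moreover have "cinner (rank_one_update \<alpha> w x) (rank_one_update \<alpha> w y) = cinner x y" for x y
  proof -
    have "cinner (rank_one_update \<alpha> w x) (rank_one_update \<alpha> w y) = cinner x y
        - cnj (cinner w x) * cinner w y * (\<alpha> + cnj \<alpha> - \<alpha> * cnj \<alpha> * cinner w w)"
      using cinner_commute[of x w] unfolding rank_one_update_def
      by (simp add: cinner_diff_left cinner_diff_right cinner_scaleC_left cinner_scaleC_right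
          algebra_simps)
    then show ?thesis
      using assms by simp
  qed
  ultimately show ?thesis
    unfolding unitary_def by blast
qed

lemma clinear_fixing_hyperplane:
  assumes "clinear q" "csubspace V" "e \<in> V" "cinner e e = 1"
    and fixed: "\<And>y. y \<in> V \<Longrightarrow> cinner e y = 0 \<Longrightarrow> q y = y" and "x \<in> V"
  shows "q x = x + scaleC (cinner e x) (q e - e)"
proof -
  define y where "y = x - scaleC (cinner e x) e"
  have "q y = y"
    using assms unfolding y_def
    by (intro fixed) (simp_all add: cvs.subspace_diff cvs.subspace_scale cinner_diff_right
        cinner_scaleC_right)
  moreover have "q x = q y + scaleC (cinner e x) (q e)"
    using assms(1) unfolding y_def clinear_def by (metis add_diff_cancel diff_add_cancel)
  ultimately show ?thesis
    unfolding y_def by (simp add: cvs.scale_right_diff_distrib)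
qed

subsection \<open>The defining property of \<open>\<pi>\<close>\<close>

lemma is_pi_self:
  assumes "unitary q" "\<forall>x\<in>orthogonal_complement F. q x = x"
  shows "is_pi F q q"
proof -
  have "(0::'a) \<in> (\<lambda>x. q x - x) ` orthogonal_complement F"
    using cvs.subspace_0[OF csubspace_orthogonal_complement, of F]
      clinear_0[of q] assms(1) unfolding unitary_def by force
  then show ?thesis
    unfolding is_pi_def using assms by auto
qed

lemma is_pi_trans:
  assumes "G \<subseteq> F" "unitary u" "is_pi F u p" "is_pi G p q"
  shows "is_pi G u q"
proof -
  have lin: "clinear u"
    using assms(2) unfolding unitary_def by blast
  have "u x - q x \<in> (\<lambda>x. u x - x) ` orthogonal_complement G" for x
  proof -
    obtain a where a: "a \<in> orthogonal_complement F" "u x - p x = u a - a"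
      using assms(3) unfolding is_pi_def by blast
    obtain z where z: "z \<in> orthogonal_complement G" "p x - q x = p z - z"
      using assms(4) unfolding is_pi_def by blast
    obtain b where b: "b \<in> orthogonal_complement F" "u z - p z = u b - b"
      using assms(3) unfolding is_pi_def by blast
    have "a \<in> orthogonal_complement G" "b \<in> orthogonal_complement G"
      using a(1) b(1) orthogonal_complement_antimono[OF assms(1)] by blast+
    with z(1) have "a + z - b \<in> orthogonal_complement G"
      by (intro cvs.subspace_diff cvs.subspace_add csubspace_orthogonal_complement)
    moreover have "u x - q x = u (a + z - b) - (a + z - b)"
    proof -
      have "u x - q x = (u x - p x) + (p x - q x)"
        by simp
      also have "\<dots> = (u a - a) + (p z - z)"
        by (simp only: a(2) z(2))
      also have "p z = u z - (u b - b)"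
        by (simp add: b(2)[symmetric])
      also have "(u a - a) + (u z - (u b - b) - z) = (u a + u z - u b) - (a + z - b)"
        by (simp add: algebra_simps)
      also have "u a + u z - u b = u (a + z - b)"
        using clinear_diff[OF lin, of "a + z" b] lin unfolding clinear_def by simp
      finally show ?thesis .
    qed
    ultimately show ?thesis
      by blast
  qed
  then show ?thesis
    using assms(4) unfolding is_pi_def by auto
qed

lemma is_pi_unique:
  assumes "unitary u" "is_pi F u p" "is_pi F u q"
  shows "p = q"
proof
  fix x
  obtain z\<^sub>1 where z\<^sub>1: "z\<^sub>1 \<in> orthogonal_complement F" "u x - p x = u z\<^sub>1 - z\<^sub>1"
    using assms(2) unfolding is_pi_def by blast
  obtain z\<^sub>2 where z\<^sub>2: "z\<^sub>2 \<in> orthogonal_complement F" "u x - q x = u z\<^sub>2 - z\<^sub>2"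
    using assms(3) unfolding is_pi_def by blast
  define d where "d = p x - q x"
  define z where "z = z\<^sub>2 - z\<^sub>1"
  have "z \<in> orthogonal_complement F"
    unfolding z_def using z\<^sub>1 z\<^sub>2 csubspace_orthogonal_complement cvs.subspace_diff by blast
  then have fixed: "p z = z" "q z = z"
    using assms(2,3) unfolding is_pi_def by auto
  have "u z = u z\<^sub>2 - u z\<^sub>1"
    using assms(1) clinear_diff unfolding z_def unitary_def by blast
  also have "\<dots> = (u x - q x + z\<^sub>2) - (u x - p x + z\<^sub>1)"
    using z\<^sub>1(2) z\<^sub>2(2) by (metis diff_add_cancel)
  also have "\<dots> = z + d"
    unfolding z_def d_def by (simp add: algebra_simps)
  finally have uz: "u z = z + d" .
  have "cinner z d = cinner (p z) (p x) - cinner (q z) (q x)"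
    unfolding d_def fixed by (simp add: cinner_diff_right)
  also have "\<dots> = 0"
    using assms(2,3) unfolding is_pi_def unitary_def by simp
  finally have zd: "cinner z d = 0" "cinner d z = 0"
    using cinner_eq_zero_commute by auto
  have "cinner z z = cinner (u z) (u z)"
    using assms(1) unfolding unitary_def by simp
  also have "\<dots> = cinner z z + cinner d d"
    unfolding uz by (simp add: cinner_add_left cinner_add_right zd)
  finally have "d = 0"
    using cinner_eq_zero_iff[of d] by simp
  then show "p x = q x"
    unfolding d_def by simp
qed

lemma pi_op_eqI: "unitary u \<Longrightarrow> is_pi F u p \<Longrightarrow> pi_op E F u = p"
  unfolding pi_op_def by (blast intro: the_equality is_pi_unique)

subsection \<open>Existence\<close>

lemma is_pi_exists_step:
  assumes q: "unitary q" and e: "e \<in> orthogonal_complement F" "cinner e e = 1"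
    and fixed: "\<forall>x\<in>orthogonal_complement (insert e F). q x = x"
  shows "\<exists>p. is_pi F q p"
proof -
  have lin: "clinear q" and iso: "\<And>x y. cinner (q x) (q y) = cinner x y"
    using q unfolding unitary_def by blast+
  define w where "w = q e - e"
  define a where "a = cinner e (q e)"
  define \<alpha> where "\<alpha> = 1 / (1 - a)"
  define p where "p = rank_one_update \<alpha> w \<circ> q"
  have decomp: "q x = x + scaleC (cinner e x) w" if "x \<in> orthogonal_complement F" for x
    unfolding w_def using fixed e that
    by (intro clinear_fixing_hyperplane[OF lin csubspace_orthogonal_complement])
      (auto simp: orthogonal_complement_def)
  have ww: "cinner w w = 2 - a - cnj a"
    using iso[of e e] e(2) cinner_commute[of e "q e"]
    unfolding w_def a_def by (simp add: cinner_diff_left cinner_diff_right)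
  text \<open>If \<open>a = 1\<close> then \<open>w = 0\<close> and \<open>\<alpha> = 1 / 0 = 0\<close>, so \<open>p = q\<close>, which still works.\<close>
  have w0: "w = 0" if "a = 1"
    using ww that cinner_eq_zero_iff[of w] by simp
  have \<alpha>: "\<alpha> + cnj \<alpha> = \<alpha> * cnj \<alpha> * cinner w w"
  proof (cases "a = 1")
    case False
    then have "1 - cnj a \<noteq> 0"
      by (metis complex_cnj_one eq_iff_diff_eq_0 complex_cnj_cnj)
    then show ?thesis
      using False unfolding \<alpha>_def ww by (simp add: field_simps)
  qed (simp add: \<alpha>_def)
  have "unitary p"
    unfolding p_def by (rule unitary_comp[OF unitary_rank_one_update[OF \<alpha>] q])
  moreover have "p x = x" if x: "x \<in> orthogonal_complement F" for x
  proof -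
    have "cinner w (q x) = cinner (q e) (q x) - cinner e (q x)"
      unfolding w_def by (simp add: cinner_diff_left)
    also have "\<dots> = cinner e x - cinner e (x + scaleC (cinner e x) w)"
      using iso[of e x] decomp[OF x] by simp
    also have "\<dots> = cinner e x * (1 - a)"
      using e(2) unfolding w_def a_def
      by (simp add: cinner_add_right cinner_scaleC_right cinner_diff_right algebra_simps)
    finally have "p x = q x - scaleC (\<alpha> * (cinner e x * (1 - a))) w"
      unfolding p_def rank_one_update_def by simp
    also have "\<dots> = x + scaleC (cinner e x * (1 - \<alpha> * (1 - a))) w"
      unfolding decomp[OF x] by (simp add: algebra_simps)
    also have "scaleC (cinner e x * (1 - \<alpha> * (1 - a))) w = 0"
      using w0 by (cases "a = 1") (simp_all add: \<alpha>_def)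
    finally show ?thesis
      by simp
  qed
  moreover have "q x - p x \<in> (\<lambda>x. q x - x) ` orthogonal_complement F" for x
  proof -
    define c where "c = \<alpha> * cinner w (q x)"
    have "q x - p x = q (scaleC c e) - scaleC c e"
      using lin unfolding p_def c_def w_def clinear_def rank_one_update_def
      by (simp add: cvs.scale_right_diff_distrib)
    moreover have "scaleC c e \<in> orthogonal_complement F"
      using e(1) csubspace_orthogonal_complement by (rule cvs.subspace_scale[rotated])
    ultimately show ?thesis
      by blast
  qed
  ultimately show ?thesis
    unfolding is_pi_def by blast
qed

text \<open>Here \<open>F\<close> is an arbitrary set, so that the induction can enlarge it by one vector at a time.\<close>

lemma is_pi_exists_orthonormal:
  assumes "finite S" "orthonormal S" "S \<subseteq> orthogonal_complement F" "unitary q"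
    and "\<forall>x\<in>orthogonal_complement (F \<union> S). q x = x"
  shows "\<exists>p. is_pi F q p"
  using assms
proof (induction S arbitrary: F q rule: finite_induct)
  case empty
  then show ?case
    using is_pi_self by fastforce
next
  case (insert e S)
  have "orthonormal S" "cinner e e = 1" "\<forall>s\<in>S. cinner e s = 0"
    using insert.prems(1) insert.hyps(2) unfolding orthonormal_def by auto
  moreover have "S \<subseteq> orthogonal_complement (insert e F)"
    using insert.prems(2) calculation(3) unfolding orthogonal_complement_def by auto
  moreover have "insert e F \<union> S = F \<union> insert e S"
    by blast
  ultimately obtain p\<^sub>1 where p\<^sub>1: "is_pi (insert e F) q p\<^sub>1"
    using insert.IH[of "insert e F" q] insert.prems(3,4) by auto
  then have "unitary p\<^sub>1" "\<forall>x\<in>orthogonal_complement (insert e F). p\<^sub>1 x = x"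
    unfolding is_pi_def by blast+
  then obtain p\<^sub>2 where "is_pi F p\<^sub>1 p\<^sub>2"
    using is_pi_exists_step[of p\<^sub>1 e F] \<open>cinner e e = 1\<close> insert.prems(2) by blast
  then show ?case
    using is_pi_trans[OF _ insert.prems(3) p\<^sub>1] by blast
qed

lemma is_pi_exists:
  assumes E: "finite_dim_csubspace E" and F: "csubspace F" "F \<subseteq> E"
    and u: "unitary u" "\<forall>x\<in>orthogonal_complement E. u x = x"
  shows "\<exists>p. is_pi F u p"
proof -
  obtain B where B: "finite B" "E = cspan B"
    using E unfolding finite_dim_csubspace_def by blast
  obtain T where T: "finite T" "F = cspan T"
    using csubspace_finitely_spanned[OF B(1) F(1)] F(2) B(2) by blast
  obtain S\<^sub>F where S\<^sub>F: "finite S\<^sub>F" "orthonormal S\<^sub>F" "S\<^sub>F \<subseteq> cspan T" "T \<subseteq> cspan S\<^sub>F"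
    using gram_schmidt_extend[OF T(1), of "{}"] by (auto simp: orthonormal_def)
  have F_span: "F = cspan S\<^sub>F"
    using S\<^sub>F(3,4) T(2) by (simp add: cvs.span_eq)
  obtain S where S: "finite S" "orthonormal S" "S\<^sub>F \<subseteq> S" "B \<subseteq> cspan S"
    using gram_schmidt_extend[OF B(1) S\<^sub>F(1,2)] by blast
  have "orthonormal (S - S\<^sub>F)"
    using S(2) unfolding orthonormal_def by blast
  moreover have "S - S\<^sub>F \<subseteq> orthogonal_complement F"
  proof -
    have "S - S\<^sub>F \<subseteq> orthogonal_complement S\<^sub>F"
      using S(2,3) unfolding orthonormal_def orthogonal_complement_def by fastforce
    then show ?thesis
      by (simp add: F_span orthogonal_complement_cspan)
  qed
  moreover have "orthogonal_complement (F \<union> (S - S\<^sub>F)) \<subseteq> orthogonal_complement E"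
  proof -
    have "orthogonal_complement (F \<union> (S - S\<^sub>F)) \<subseteq> orthogonal_complement (S\<^sub>F \<union> (S - S\<^sub>F))"
      using F_span cvs.span_superset by (intro orthogonal_complement_antimono) blast
    also have "\<dots> = orthogonal_complement (cspan S)"
      using S(3) by (simp add: Un_absorb1 orthogonal_complement_cspan)
    also have "\<dots> \<subseteq> orthogonal_complement E"
      unfolding B(2) using S(4)
      by (intro orthogonal_complement_antimono cvs.span_minimal) simp_all
    finally show ?thesis .
  qed
  ultimately show ?thesis
    using is_pi_exists_orthonormal[OF _ _ _ u(1)] S(1) u(2) by blast
qed

theorem proposition2p1:
  fixes E F :: "'a::chilbert_space set" and u :: "'a \<Rightarrow> 'a"
  assumes "finite_dim_csubspace E" and "csubspace F" and "F \<subseteq> E"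
    and "unitary u" and "\<forall>x\<in>orthogonal_complement E. u x = x"
  shows "(\<exists>!p. unitary p \<and> (\<forall>x\<in>orthogonal_complement F. p x = x)
              \<and> range (\<lambda>x. u x - p x) \<subseteq> (\<lambda>x. u x - x) ` orthogonal_complement F)
    \<and> (\<forall>G. csubspace G \<and> G \<subseteq> F \<longrightarrow>
          unitary (pi_op E F u)
          \<and> (\<forall>x\<in>orthogonal_complement F. pi_op E F u x = x)
          \<and> pi_op F G (pi_op E F u) = pi_op E G u)"
proof -
  obtain p where p: "is_pi F u p"
    using is_pi_exists assms by blast
  have pi_F: "pi_op E F u = p"
    using pi_op_eqI[OF assms(4) p] .
  have p_fixes: "unitary p" "\<forall>x\<in>orthogonal_complement E. p x = x"
    using p orthogonal_complement_antimono[OF assms(3)] unfolding is_pi_def by blast+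
  have "pi_op F G p = pi_op E G u" if G: "csubspace G" "G \<subseteq> F" for G
  proof -
    obtain q where q: "is_pi G p q"
      using is_pi_exists[OF assms(1) G(1) _ p_fixes] G(2) assms(3) by blast
    then have "is_pi G u q"
      using is_pi_trans[OF G(2) assms(4) p] by blast
    then show ?thesis
      using pi_op_eqI[OF p_fixes(1) q] pi_op_eqI[OF assms(4)] by metis
  qed
  moreover have "\<exists>!p. is_pi F u p"
    using p is_pi_unique[OF assms(4) p] by blast
  moreover have "\<forall>x\<in>orthogonal_complement F. p x = x"
    using p unfolding is_pi_def by blast
  ultimately show ?thesis
    unfolding is_pi_def[symmetric] pi_F using p_fixes(1) by blast
qed

end
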